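(* Let $R$ be an associative ring with identity and involution $*$, and let $a\in R^{\#}\cap R^{\dagger}$. Let $\tau_a=\{a,\ a^{\#},\ (a^{\dagger})^*\}$ and $\gamma_a=\{a^{\dagger},\ a^*,\ (a^{\#})^*\}$. Then the following are equivalent: (1) $a\in R^{SEP}$; (2) $xx^{\dagger}a^2a^*a^{\dagger}\in PE(R)$ for some $x\in\gamma_a$; (3) $x^{\dagger}xa^2a^*a^{\dagger}\in PE(R)$ for some $x\in\tau_a$.
   Context: An involution on $R$ is a map $x\mapsto x^*$ with $(x^* )^*=x$, $(x+y)^*=x^*+y^*$, $(xy)^*=y^*x^*$. An element $a$ is Moore–Penrose invertible if there is $b$ with $aba=a$, $bab=b$, $(ab)^*=ab$, $(ba)^*=ba$; such $b$ is unique, denoted $a^{\dagger}$, and $R^{\dagger}$ is the set of such $a$ (all elements of $\tau_a\cup\gamma_a$ are Moore–Penrose invertible when $a\in R^{\#}\cap R^{\dagger}$). An element $a$ is group invertible if there is $b$ with $aba=a$, $bab=b$, $ab=ba$; such $b$ is unique, denoted $a^{\#}$, and $R^{\#}$ is the set of such $a$. $PE(R)=\{e\in R: e^2=e=e^*\}$ is the set of projections. For $a\in R^{\#}\cap R^{\dagger}$, $a$ is SEP if $a^*=a^{\dagger}=a^{\#}$; $R^{SEP}$ denotes the set of SEP elements. *)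

theory Defs
  imports Main
begin

definition is_involution :: "('a::ring_1 \<Rightarrow> 'a) \<Rightarrow> bool" where
  "is_involution star \<longleftrightarrow>
     (\<forall>x. star (star x) = x) \<and> (\<forall>x y. star (x + y) = star x + star y) \<and>
     (\<forall>x y. star (x * y) = star y * star x)"

definition is_mp_inverse :: "('a::ring_1 \<Rightarrow> 'a) \<Rightarrow> 'a \<Rightarrow> 'a \<Rightarrow> bool" where
  "is_mp_inverse star a b \<longleftrightarrow>
     a * b * a = a \<and> b * a * b = b \<and> star (a * b) = a * b \<and> star (b * a) = b * a"

definition mp_invertible :: "('a::ring_1 \<Rightarrow> 'a) \<Rightarrow> 'a \<Rightarrow> bool" where
  "mp_invertible star a \<longleftrightarrow> (\<exists>b. is_mp_inverse star a b)"

text \<open>The Moore--Penrose inverse (unique when it exists).\<close>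
definition mp_inv :: "('a::ring_1 \<Rightarrow> 'a) \<Rightarrow> 'a \<Rightarrow> 'a" where
  "mp_inv star a = (THE b. is_mp_inverse star a b)"

definition is_group_inverse :: "'a::ring_1 \<Rightarrow> 'a \<Rightarrow> bool" where
  "is_group_inverse a b \<longleftrightarrow> a * b * a = a \<and> b * a * b = b \<and> a * b = b * a"

definition group_invertible :: "'a::ring_1 \<Rightarrow> bool" where
  "group_invertible a \<longleftrightarrow> (\<exists>b. is_group_inverse a b)"

text \<open>The group inverse (unique when it exists).\<close>
definition group_inv :: "'a::ring_1 \<Rightarrow> 'a" where
  "group_inv a = (THE b. is_group_inverse a b)"

definition is_projection :: "('a::ring_1 \<Rightarrow> 'a) \<Rightarrow> 'a \<Rightarrow> bool" where
  "is_projection star e \<longleftrightarrow> e * e = e \<and> e = star e"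

definition is_SEP :: "('a::ring_1 \<Rightarrow> 'a) \<Rightarrow> 'a \<Rightarrow> bool" where
  "is_SEP star a \<longleftrightarrow> group_invertible a \<and> mp_invertible star a \<and>
     star a = mp_inv star a \<and> mp_inv star a = group_inv a"

end

theory Submission
  imports Defs
begin

(* Write p = a\<dagger>a and E = a\<dagger>a a\<^sup>2 a\<^sup>* a\<dagger>. Since (a#)\<dagger> = a\<dagger>a a aa\<dagger> and the
   Moore-Penrose inverse of x\<^sup>* is (x\<dagger>)\<^sup>*, one has x x\<dagger> = p for every x in \<gamma>_a and
   x\<dagger> x = p for every x in \<tau>_a, so conditions (2) and (3) both say that E is a projection.
   If E is Hermitian then E = aa\<dagger> E; cancelling the tail a\<^sup>* a\<dagger> on the right and then a\<^sup>2
   by (a#)\<^sup>2 gives a\<dagger>a = aa\<dagger> a\<dagger>a, which forces a\<dagger> = a#. Idempotency of E then forces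
   E = aa\<dagger>, hence a a a\<^sup>* = a, so a\<^sup>* is the Moore-Penrose inverse of a. Conversely, for
   a SEP element E = aa\<dagger>. *)

lemma mp_inverse_swap: "is_mp_inverse star a b \<Longrightarrow> is_mp_inverse star b a"
  by (auto simp: is_mp_inverse_def)

lemma group_inverse_unique:
  assumes g: "is_group_inverse a g" and h: "is_group_inverse a h"
  shows "g = h"
proof -
  have g': "a * g * a = a" "g * a * g = g" "a * g = g * a"
    and h': "a * h * a = a" "h * a * h = h" "a * h = h * a"
    using g h by (auto simp: is_group_inverse_def)
  have "g * a = g * (a * h * a)" using h' by simp
  also have "\<dots> = a * g * a * h" using g' h' by (metis mult.assoc)
  also have "\<dots> = h * a" using g' h' by simp
  finally have ga: "g * a = h * a" .
  have "g = h * a * g" using g' ga by simp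
  also have "\<dots> = h * (a * g)" by (simp add: mult.assoc)
  also have "\<dots> = h" using g' h' ga by (metis mult.assoc)
  finally show ?thesis .
qed

lemma group_inv_eqI: "is_group_inverse a g \<Longrightarrow> group_inv a = g"
  unfolding group_inv_def using group_inverse_unique by blast

locale involutive_ring =
  fixes star :: "'a::ring_1 \<Rightarrow> 'a"
  assumes involution: "is_involution star"
begin

lemma star_star [simp]: "star (star x) = x"
  using involution by (simp add: is_involution_def)

lemma star_mult: "star (x * y) = star y * star x"
  using involution by (simp add: is_involution_def)

lemma mp_inverse_unique:
  assumes b: "is_mp_inverse star a b" and c: "is_mp_inverse star a c"
  shows "b = c"
proof -
  have b': "a * b * a = a" "b * a * b = b" "star (a * b) = a * b" "star (b * a) = b * a"
    and c': "a * c * a = a" "c * a * c = c" "star (a * c) = a * c" "star (c * a) = c * a"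
    using b c by (auto simp: is_mp_inverse_def)
  have "a * b = star (a * c * a * b)" using b' c' by simp
  also have "\<dots> = star (a * b) * star (a * c)" by (simp add: star_mult [symmetric] mult.assoc)
  also have "\<dots> = a * b * (a * c)" using b' c' by simp
  also have "\<dots> = a * c" using b' by (simp add: mult.assoc [symmetric])
  finally have ab: "a * b = a * c" .
  have "b * a = star (b * a * c * a)" using b' c' by (simp add: mult.assoc)
  also have "\<dots> = star (c * a) * star (b * a)" by (simp add: star_mult [symmetric] mult.assoc)
  also have "\<dots> = c * a * (b * a)" using b' c' by simp
  also have "\<dots> = c * a" using b' by (simp add: mult.assoc)
  finally have ba: "b * a = c * a" .
  have "b = b * a * b" using b' by simp
  also have "\<dots> = c * a * c" using ab ba by (metis mult.assoc)
  finally show ?thesis using c' by simp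
qed

lemma mp_inv_eqI: "is_mp_inverse star a b \<Longrightarrow> mp_inv star a = b"
  unfolding mp_inv_def using mp_inverse_unique by blast

lemma mp_inverse_star:
  assumes "is_mp_inverse star a b"
  shows "is_mp_inverse star (star a) (star b)"
proof -
  have "star a * star b * star a = star (a * b * a)" "star b * star a * star b = star (b * a * b)"
    "star a * star b = star (b * a)" "star b * star a = star (a * b)"
    by (simp_all add: star_mult mult.assoc)
  then show ?thesis using assms by (simp add: is_mp_inverse_def)
qed

lemma mp_inverse_self_star:
  assumes "a * star a * a = a"
  shows "is_mp_inverse star a (star a)"
proof -
  have "star a * a * star a = star (a * star a * a)" by (simp add: star_mult mult.assoc)
  then show ?thesis using assms by (simp add: is_mp_inverse_def star_mult)
qed

lemma star_mult_mp_inv_star: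
  assumes "is_mp_inverse star x y"
  shows "star x * mp_inv star (star x) = y * x"
proof -
  have "star x * mp_inv star (star x) = star (y * x)"
    using mp_inv_eqI [OF mp_inverse_star [OF assms]] by (simp add: star_mult)
  then show ?thesis using assms by (simp add: is_mp_inverse_def)
qed

lemma mp_inv_star_mult_star:
  assumes "is_mp_inverse star x y"
  shows "mp_inv star (star x) * star x = x * y"
proof -
  have "mp_inv star (star x) * star x = star (x * y)"
    using mp_inv_eqI [OF mp_inverse_star [OF assms]] by (simp add: star_mult)
  then show ?thesis using assms by (simp add: is_mp_inverse_def)
qed

end

locale group_mp_invertible = involutive_ring +
  fixes a b g :: "'a::ring_1"
  assumes mp_inverse: "is_mp_inverse star a b"
    and group_inverse: "is_group_inverse a g"
begin

lemma mp_inverse_absorb [simp]: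
  "a * (b * a) = a" "a * (b * (a * x)) = a * x"
  "b * (a * b) = b" "b * (a * (b * x)) = b * x"
  using mp_inverse by (simp_all add: is_mp_inverse_def flip: mult.assoc)

lemma star_mp_projections [simp]: "star (a * b) = a * b" "star (b * a) = b * a"
  using mp_inverse by (simp_all add: is_mp_inverse_def)

lemma group_commute: "a * g = g * a"
  using group_inverse by (simp add: is_group_inverse_def)

lemma group_inverse_absorb [simp]:
  "a * (g * a) = a" "a * (g * (a * x)) = a * x"
  "g * (a * g) = g" "g * (a * (g * x)) = g * x"
  "g * (a * a) = a" "g * (a * (a * x)) = a * x"
  "a * (a * g) = a" "a * (a * (g * x)) = a * x"
  "a * (g * g) = g" "a * (g * (g * x)) = g * x"
  "g * (g * a) = g" "g * (g * (a * x)) = g * x"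
proof -
  have aga: "a * g * a = a" and gag: "g * a * g = g"
    using group_inverse unfolding is_group_inverse_def by blast+
  show "a * (g * a) = a" "g * (a * g) = g" "g * (a * a) = a" "a * (a * g) = a" "a * (g * g) = g"
    "g * (g * a) = g"
    using aga gag group_commute by (metis mult.assoc)+
  then show "a * (g * (a * x)) = a * x" "g * (a * (g * x)) = g * x" "g * (a * (a * x)) = a * x"
    "a * (a * (g * x)) = a * x" "a * (g * (g * x)) = g * x" "g * (g * (a * x)) = g * x"
    by (metis mult.assoc)+
qed

lemma mp_projections_absorb_star [simp]:
  "b * (a * star a) = star a" "b * (a * (star a * x)) = star a * x"
  "star a * (a * b) = star a" "star a * (a * (b * x)) = star a * x"
  "a * (b * star b) = star b" "a * (b * (star b * x)) = star b * x"
proof -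
  have "star a = star (a * (b * a))" by simp
  also have "\<dots> = b * (a * star a)" by (simp only: star_mult [of a] star_mp_projections mult.assoc)
  finally show "b * (a * star a) = star a" by simp
  have "star a = star (a * b * a)" by (simp add: mult.assoc)
  also have "\<dots> = star a * (a * b)" by (simp only: star_mult [of _ a] star_mp_projections)
  finally show "star a * (a * b) = star a" by simp
  have "star b = star (b * (a * b))" by simp
  also have "\<dots> = a * (b * star b)" by (simp only: star_mult [of b] star_mp_projections mult.assoc)
  finally show "a * (b * star b) = star b" by simp
  then show "b * (a * (star a * x)) = star a * x" "star a * (a * (b * x)) = star a * x"
    "a * (b * (star b * x)) = star b * x"
    using \<open>b * (a * star a) = star a\<close> \<open>star a * (a * b) = star a\<close>
    by (metis mult.assoc)+
qed

lemma star_mult_star_mp [simp]: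
  "star a * star b = b * a" "star a * (star b * x) = b * (a * x)"
  "star b * star a = a * b" "star b * (star a * x) = a * (b * x)"
  by (simp_all add: star_mult [symmetric] mult.assoc [symmetric])

lemma mp_projection_absorb_group_inverse [simp]: "a * (b * g) = g"
proof -
  have "a * (b * g) = a * (b * (a * (g * g)))" by simp
  also have "\<dots> = a * (g * g)" by (rule mp_inverse_absorb(2))
  also have "\<dots> = g" by simp
  finally show ?thesis .
qed

lemma mp_inverse_group_inverse: "is_mp_inverse star g (b * a * a * a * b)"
proof -
  have "g * (b * a * a * a * b) = g * (g * a) * (b * a * a * a * b)" by simp
  also have "\<dots> = g * (g * (a * (b * (a * (a * (a * b))))))" by (simp only: mult.assoc)
  also have "\<dots> = a * b" by simp
  finally have left: "g * (b * a * a * a * b) = a * b" .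
  have right: "b * a * a * a * b * g = b * a" by (simp add: mult.assoc)
  show ?thesis
    unfolding is_mp_inverse_def using left right by (simp add: mult.assoc)
qed

lemma mp_inv_group_inverse_mult: "mp_inv star g * g = b * a"
  using mp_inv_eqI [OF mp_inverse_group_inverse] by (simp add: mult.assoc)

lemma mult_mp_inv_of_gamma:
  assumes "x \<in> {b, star a, star g}"
  shows "x * mp_inv star x = b * a"
proof -
  have "b * mp_inv star b = b * a"
    using mp_inv_eqI [OF mp_inverse_swap [OF mp_inverse]] by simp
  moreover have "star a * mp_inv star (star a) = b * a"
    using star_mult_mp_inv_star [OF mp_inverse] .
  moreover have "star g * mp_inv star (star g) = b * a"
    using star_mult_mp_inv_star [OF mp_inverse_group_inverse] by (simp add: mult.assoc)
  ultimately show ?thesis using assms by auto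
qed

lemma mp_inv_mult_of_tau:
  assumes "x \<in> {a, g, star b}"
  shows "mp_inv star x * x = b * a"
proof -
  have "mp_inv star a * a = b * a"
    using mp_inv_eqI [OF mp_inverse] by simp
  moreover have "mp_inv star (star b) * star b = b * a"
    using mp_inv_star_mult_star [OF mp_inverse_swap [OF mp_inverse]] .
  ultimately show ?thesis using assms mp_inv_group_inverse_mult by auto
qed

lemma mp_inverse_eq_group_inverse_if_ba_eq:
  assumes "b * a = g * a"
  shows "b = g"
proof -
  have "a * b = a * g * (a * b)" by (simp add: mult.assoc)
  also have "\<dots> = b * a * (a * b)" using assms group_commute by simp
  finally have q: "a * b = b * a * (a * b)" .
  have "b * a = a * g" using assms group_commute by simp
  also have "\<dots> = a * b * (a * g)" by (simp add: mult.assoc)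
  finally have p: "b * a = a * b * (b * a)" using assms group_commute by simp
  have "a * b = star (b * a * (a * b))" using q by simp
  also have "\<dots> = a * b * (b * a)" by (simp add: star_mult)
  finally have "a * b = b * a" using p by simp
  have "b = b * a * b" by (simp add: mult.assoc)
  also have "\<dots> = g * (a * b)" using assms by (metis mult.assoc)
  also have "\<dots> = g * (g * a)" using \<open>a * b = b * a\<close> assms by simp
  finally show ?thesis by simp
qed

lemma mp_inverse_eq_group_inverse_if_proj_le:
  assumes "b * a = a * b * (b * a)"
  shows "b = g"
proof -
  have "b = b * a * b" by (simp add: mult.assoc)
  also have "\<dots> = a * b * (b * a) * b" using assms by simp
  also have "\<dots> = a * (b * b)" by (simp add: mult.assoc)
  finally have b: "b = a * (b * b)" .
  have "g * (a * b) = g * (a * (a * (b * b)))" by (simp only: b [symmetric])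
  also have "\<dots> = a * (b * b)" by simp
  finally have gab: "g * (a * b) = b" using b by simp
  have "b * a = g * (a * b) * a" using gab by simp
  also have "\<dots> = g * a" by (simp add: mult.assoc)
  finally show ?thesis by (rule mp_inverse_eq_group_inverse_if_ba_eq)
qed

lemma mp_inverse_eq_group_inverse_if_hermitian:
  assumes "star (b * a * a * a * star a * b) = b * a * a * a * star a * b"
  shows "b = g"
proof -
  define E where "E = b * a * a * a * star a * b"
  define W where "W = a * star a * star g * star g * star a * star b"
  have "E = star E" using assms by (simp add: E_def)
  also have "\<dots> = a * b * star E" by (simp add: E_def star_mult mult.assoc)
  finally have range: "E = a * b * E" using assms by (simp add: E_def)
  have "star a * b * W = star a * star a * star g * star g * star a * star b"
    by (simp add: W_def mult.assoc)
  also have "\<dots> = star (b * a * g * g * a * a)" by (simp only: star_mult mult.assoc)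
  also have "\<dots> = b * a" by (simp add: mult.assoc)
  finally have cancel: "star a * b * W = b * a" .
  have EW: "E * W = b * a * a * a"
  proof -
    have "E * W = b * a * a * a * (star a * b * W)" by (simp add: E_def mult.assoc)
    also have "\<dots> = b * a * a * a" using cancel by (simp add: mult.assoc)
    finally show ?thesis .
  qed
  have "b * a = b * a * a * a * (g * g)" by (simp add: mult.assoc)
  also have "\<dots> = a * b * (b * a * a * a) * (g * g)" using range EW by (metis mult.assoc)
  also have "\<dots> = a * b * (b * a)" by (simp add: mult.assoc)
  finally show ?thesis by (rule mp_inverse_eq_group_inverse_if_proj_le)
qed

lemma star_eq_mp_inverse_if_idempotent:
  assumes "b = g"
    and "b * a * a * a * star a * b * (b * a * a * a * star a * b) = b * a * a * a * star a * b"
  shows "star a = b"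
proof -
  define E where "E = b * a * a * a * star a * b"
  have "a * b = b * a" using assms(1) group_commute by simp
  have E_eq: "E = a * a * star a * b" using assms(1) by (simp add: E_def mult.assoc)
  have "E * (a * star b * (b * b)) = a * a * (star a * (b * a)) * star b * (b * b)"
    by (simp add: E_eq mult.assoc)
  also have "\<dots> = a * a * (star a * (a * b)) * star b * (b * b)"
    using \<open>a * b = b * a\<close> by simp
  also have "\<dots> = a * a * (b * a) * (b * b)" by (simp add: mult.assoc)
  also have "\<dots> = a * b" using assms(1) by (simp add: mult.assoc)
  finally have E_y: "E * (a * star b * (b * b)) = a * b" .
  have "E = E * (a * b)" by (simp add: E_def mult.assoc)
  also have "\<dots> = E * E * (a * star b * (b * b))" using E_y by (simp add: mult.assoc)
  also have "\<dots> = a * b" using assms(2) E_y by (simp add: E_def)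
  finally have "E = a * b" .
  have "a = a * b * a" by (simp add: mult.assoc)
  also have "\<dots> = a * a * star a * (b * a)" by (simp add: \<open>E = a * b\<close> [symmetric] E_eq mult.assoc)
  also have "\<dots> = a * a * star a" by (simp add: mult.assoc flip: \<open>a * b = b * a\<close>)
  finally have "a * a * star a = a" ..
  have "a * star a = g * (a * a * star a)" by (simp add: mult.assoc)
  also have "\<dots> = g * a" using \<open>a * a * star a = a\<close> by simp
  finally have "a * star a * a = g * a * a" by simp
  then have "a * star a * a = a" by (simp add: mult.assoc)
  then show ?thesis using mp_inverse_unique [OF mp_inverse_self_star mp_inverse] by blast
qed

lemma projection_iff_star_eq_mp_inverse_eq_group_inverse:
  "is_projection star (b * a * a * a * star a * b) \<longleftrightarrow> star a = b \<and> b = g"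
proof
  assume "is_projection star (b * a * a * a * star a * b)"
  then have "b = g"
    and "star a = b"
    using mp_inverse_eq_group_inverse_if_hermitian star_eq_mp_inverse_if_idempotent
    unfolding is_projection_def by auto
  then show "star a = b \<and> b = g" by blast
next
  assume "star a = b \<and> b = g"
  then have "b * a * a * a * star a * b = b * a" by (simp add: mult.assoc group_commute)
  moreover have "is_projection star (b * a)" by (simp add: is_projection_def mult.assoc)
  ultimately show "is_projection star (b * a * a * a * star a * b)" by simp
qed

end

theorem corollary2p6:
  fixes star :: "'a::ring_1 \<Rightarrow> 'a" and a :: 'a
  assumes "is_involution star"
    and "group_invertible a"
    and "mp_invertible star a"
  shows "(is_SEP star a \<longleftrightarrow>
            (\<exists>x \<in> {mp_inv star a, star a, star (group_inv a)}.
               is_projection star (x * mp_inv star x * a ^ 2 * star a * mp_inv star a)))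
       \<and> (is_SEP star a \<longleftrightarrow>
            (\<exists>x \<in> {a, group_inv a, star (mp_inv star a)}.
               is_projection star (mp_inv star x * x * a ^ 2 * star a * mp_inv star a)))"
proof -
  obtain b where b: "is_mp_inverse star a b" using assms(3) unfolding mp_invertible_def by blast
  obtain g where g: "is_group_inverse a g" using assms(2) unfolding group_invertible_def by blast
  interpret group_mp_invertible star a b g
    by unfold_locales (fact assms(1) b g)+
  have inverses: "mp_inv star a = b" "group_inv a = g"
    using mp_inv_eqI [OF b] group_inv_eqI [OF g] .
  have "is_SEP star a \<longleftrightarrow> is_projection star (b * a * a * a * star a * b)"
    using assms(2,3) inverses projection_iff_star_eq_mp_inverse_eq_group_inverse
    by (auto simp: is_SEP_def)
  moreover have "x * mp_inv star x * a ^ 2 * star a * b = b * a * a * a * star a * b"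
    if "x \<in> {b, star a, star g}" for x
    using mult_mp_inv_of_gamma [OF that] by (simp add: power2_eq_square mult.assoc)
  moreover have "mp_inv star x * x * a ^ 2 * star a * b = b * a * a * a * star a * b"
    if "x \<in> {a, g, star b}" for x
    using mp_inv_mult_of_tau [OF that] by (simp add: power2_eq_square mult.assoc)
  ultimately show ?thesis unfolding inverses by auto
qed

end
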